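(* Let $m,k$ be natural numbers. If the first term in the hereditary representation in base $k+1$ of the $k$-th term $G(k,m)$ of the Goodstein sequence $G(m)$ is of the form $1\cdot(k+1)^{l}$ with $k+1\le l$, then $G(k+1,m)>G(k,m)$.
   Context: For a natural number base $b>1$, the hereditary representation $m\langle b\rangle$ of $m$ is $\sum_{i=0}^{l} a_i b^{i}$ with $0\le a_i<b$, $a_l\ne0$, each exponent itself written in hereditary representation in base $b$, recursively; its first (leading) term is $a_l b^{l}$. $m\langle b\rangle''$ is obtained by syntactically replacing every $b$ by $b+1$ in $m\langle b\rangle$. The Goodstein sequence $G(m)=\{m, m''-1, (m''-1)''-1,\dots\}$ starts from $m$ in base $2$; its $n$-th term is $G(n,m)$, with $G(1,m)=m$ in base $2$, $G(k,m)$ written in base $k+1$, and $G(k+1,m)=G(k,m)\langle k+1\rangle''-1$. *)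

theory Defs
  imports Main
begin

text \<open>Base bump: write m in hereditary base-b representation
  m = sum_i a_i b^i (a_i = i-th base-b digit, exponents i themselves hereditary)
  and replace every b by b+1, i.e. m<b>'' = sum_i a_i (b+1)^(i<b>'').
  Digit positions i with a nonzero digit satisfy i < m, so summing over i < m suffices.\<close>
function bump :: "nat \<Rightarrow> nat \<Rightarrow> nat" where
  "bump b m = (if b < 2 then m else
     (\<Sum>i<m. (m div b ^ i mod b) * (b + 1) ^ bump b i))"
  by pat_completeness simp
termination
  by (relation "measure snd") auto

declare bump.simps[simp del]

text \<open>Goodstein sequence, 1-indexed: G(1,m) = m, G(k+1,m) = G(k,m)<k+1>'' - 1.
  Index 0 is not used (set to m for totality).\<close>
fun goodstein :: "nat \<Rightarrow> nat \<Rightarrow> nat" where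
  "goodstein 0 m = m"
| "goodstein (Suc 0) m = m"
| "goodstein (Suc (Suc k)) m = bump (Suc k + 1) (goodstein (Suc k) m) - 1"

definition lead_exp :: "nat \<Rightarrow> nat \<Rightarrow> nat" where
  "lead_exp b m = (GREATEST l. b ^ l \<le> m)"

definition lead_coeff :: "nat \<Rightarrow> nat \<Rightarrow> nat" where
  "lead_coeff b m = m div b ^ lead_exp b m"

end

theory Submission
  imports Defs
begin

text \<open>Write n = G(k,m) and b = k+1. A leading term 1 \<cdot> b^l means b^l \<le> n < 2 b^l. Bumping only
  increases the terms of the hereditary representation, so n<b>'' \<ge> (b+1)^l, and since l \<ge> b
  the binomial expansion gives (b+1)^l \<ge> b^l + l b^(l-1) + 1 \<ge> 2 b^l + 1 > n + 1.\<close>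

lemma sum_digits_eq_mod:
  fixes b m :: nat
  shows "(\<Sum>i<n. (m div b ^ i mod b) * b ^ i) = m mod b ^ n"
proof (induction n)
  case 0
  then show ?case by simp
next
  case (Suc n)
  have "m mod b ^ Suc n = b ^ n * (m div b ^ n mod b) + m mod b ^ n"
    by (metis mod_mult2_eq power_Suc2)
  with Suc show ?case by (simp add: mult.commute)
qed

lemma self_less_power:
  fixes b :: nat
  assumes "2 \<le> b"
  shows "m < b ^ m"
proof -
  have "m < 2 ^ m"
    by (rule less_exp)
  also have "\<dots> \<le> b ^ m"
    using assms by (rule power_mono) simp
  finally show ?thesis .
qed

lemma le_bump:
  assumes "2 \<le> b"
  shows "m \<le> bump b m"
proof (induction m rule: less_induct)
  case (less m)
  have "m < b ^ m"
    using assms by (rule self_less_power)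
  then have "m = (\<Sum>i<m. (m div b ^ i mod b) * b ^ i)"
    by (simp add: sum_digits_eq_mod)
  also have "\<dots> \<le> (\<Sum>i<m. (m div b ^ i mod b) * (b + 1) ^ bump b i)"
  proof (rule sum_mono)
    fix i
    assume "i \<in> {..<m}"
    then have "b ^ i \<le> b ^ bump b i"
      using less.IH assms by (simp add: power_increasing)
    also have "\<dots> \<le> (b + 1) ^ bump b i"
      by (simp add: power_mono)
    finally show "(m div b ^ i mod b) * b ^ i \<le> (m div b ^ i mod b) * (b + 1) ^ bump b i"
      by simp
  qed
  also have "\<dots> = bump b m"
    using assms by (subst (2) bump.simps) simp
  finally show ?case .
qed

lemma power_le_bump_if_digit_nonzero:
  assumes "2 \<le> b" and "m div b ^ i mod b \<noteq> 0"
  shows "(b + 1) ^ i \<le> bump b m"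
proof -
  have "i < m"
  proof (rule ccontr)
    assume "\<not> i < m"
    then have "m < b ^ i"
      using self_less_power[OF assms(1), of i] by simp
    with assms(2) show False by simp
  qed
  have "(b + 1) ^ i \<le> (b + 1) ^ bump b i"
    using le_bump[OF assms(1)] by (simp add: power_increasing)
  also have "\<dots> \<le> (m div b ^ i mod b) * (b + 1) ^ bump b i"
    using assms(2) by simp
  also have "\<dots> \<le> (\<Sum>j<m. (m div b ^ j mod b) * (b + 1) ^ bump b j)"
    using \<open>i < m\<close> by (intro member_le_sum) auto
  also have "\<dots> = bump b m"
    using assms(1) by (subst (2) bump.simps) simp
  finally show ?thesis .
qed

lemma binomial_three_terms_le:
  fixes b :: nat
  shows "b ^ (l + 2) + (l + 2) * b ^ (l + 1) + 1 \<le> (b + 1) ^ (l + 2)"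
proof (induction l)
  case 0
  then show ?case by (simp add: power2_eq_square algebra_simps)
next
  case (Suc l)
  have "b ^ (Suc l + 2) + (Suc l + 2) * b ^ (Suc l + 1) + 1
        \<le> (b + 1) * (b ^ (l + 2) + (l + 2) * b ^ (l + 1) + 1)"
    by (simp add: algebra_simps)
  also have "\<dots> \<le> (b + 1) * (b + 1) ^ (l + 2)"
    using Suc.IH by (rule mult_le_mono2)
  finally show ?case by simp
qed

lemma double_power_less_Suc_power:
  fixes b :: nat
  assumes "2 \<le> b" and "b \<le> l"
  shows "2 * b ^ l < (b + 1) ^ l"
proof -
  obtain j where l: "l = j + 2"
    using assms by (metis add.commute le_Suc_ex le_trans)
  have "b ^ l = b * b ^ (j + 1)"
    using l by simp
  also have "\<dots> \<le> l * b ^ (j + 1)"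
    using assms(2) by (rule mult_le_mono1)
  finally have "2 * b ^ l < b ^ l + l * b ^ (j + 1) + 1"
    by linarith
  also have "\<dots> \<le> (b + 1) ^ l"
    using binomial_three_terms_le[of b j] l by simp
  finally show ?thesis .
qed

lemma goodstein_step:
  assumes "1 \<le> k"
  shows "goodstein (k + 1) m = bump (k + 1) (goodstein k m) - 1"
  using assms by (cases k) auto

theorem lemma4:
  fixes m k :: nat
  assumes "k \<ge> 1"
    and "goodstein k m \<noteq> 0"
    and "lead_coeff (k + 1) (goodstein k m) = 1"
    and "k + 1 \<le> lead_exp (k + 1) (goodstein k m)"
  shows "goodstein (k + 1) m > goodstein k m"
proof -
  define b n where "b = k + 1" and "n = goodstein k m"
  define l where "l = lead_exp b n"
  have b: "2 \<le> b"
    using assms(1) b_def by simp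
  have lead: "n div b ^ l = 1"
    using assms(3) unfolding lead_coeff_def b_def n_def l_def .
  have "n = b ^ l + n mod b ^ l"
    using div_mult_mod_eq[of n "b ^ l"] lead by simp
  moreover have "n mod b ^ l < b ^ l"
    using b by simp
  ultimately have "n + 1 \<le> 2 * b ^ l"
    by linarith
  also have "\<dots> < (b + 1) ^ l"
    using double_power_less_Suc_power[OF b] assms(4) b_def n_def l_def by simp
  also have "\<dots> \<le> bump b n"
    using power_le_bump_if_digit_nonzero[OF b] lead b by simp
  finally show ?thesis
    using goodstein_step[OF assms(1)] b_def n_def by simp
qed

end
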